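(* Let $G$ be a two-player stage game with $|V_1^{m,p}|>1$ and $|V_2^{m,p}|>1$. If $G\in\mathcal{G}_{LS}^{m,m}$, then $G\in\mathcal{G}_{LS}^{m,p}$.
   Context: A two-player stage game $G$ has finite nonempty action sets $A_1,A_2$ and payoffs $u_1,u_2:A_1\times A_2\to\mathbb{R}$, extended to mixed strategies by expectation. $G(T)$ is the $T$-round repetition with realized actions observed each round and payoffs the expected sum of stage payoffs; an SPE of $G(T)$ is a strategy profile whose continuation after every history of length $k<T$ is a Nash equilibrium of $G(T-k)$. Regimes: pure-pure ($p,p$): both players restricted to actions (in the stage game and in every round, including deviations); mixed-pure ($m,p$): player 1 may mix, player 2 uses only actions; mixed-mixed ($m,m$): both may mix. For regime $r$, $\mathrm{Nash}^r(G)$ is the set of stage-game profiles available in $r$ from which no player can profitably deviate unilaterally to a strategy available in $r$, and $V_i^r=\{u_i(\sigma):\sigma\in\mathrm{Nash}^r(G)\}$. Locally suboptimal behavior occurs in an SPE $\mu$ of $G(T)$ (regime $r$) if for some history $h$ of length $k<T$, $(\mu_1(h),\mu_2(h))\notin\mathrm{Nash}^r(G)$. $\mathcal{G}_{LS}^r$ is the set of stage games $G$ for which there exist $T\ge1$ and an SPE of $G(T)$ in regime $r$ in which locally suboptimal behavior occurs. *)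

theory Defs
  imports Main "HOL-Library.Indicator_Function" Complex_Main
begin

text \<open>A two-player stage game: finite nonempty action sets A1, A2 and payoffs
u1, u2 :: 'a => 'b => real.\<close>

definition is_mixed :: "'a set \<Rightarrow> ('a \<Rightarrow> real) \<Rightarrow> bool" where
  "is_mixed A p \<longleftrightarrow> (\<forall>x. 0 \<le> p x) \<and> (\<forall>x. x \<notin> A \<longrightarrow> p x = 0) \<and> sum p A = 1"

definition point_mass :: "'a \<Rightarrow> 'a \<Rightarrow> real" where
  "point_mass a = (\<lambda>x. if x = a then 1 else 0)"

definition avail :: "bool \<Rightarrow> 'a set \<Rightarrow> ('a \<Rightarrow> real) set" where
  "avail mix A = (if mix then {p. is_mixed A p} else point_mass ` A)"

text \<open>A regime is a pair (player 1 may mix, player 2 may mix):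
(m,m) = (True,True), (m,p) = (True,False), (p,p) = (False,False).\<close>
type_synonym regime = "bool \<times> bool"

definition exp_pay :: "'a set \<Rightarrow> 'b set \<Rightarrow> ('a \<Rightarrow> 'b \<Rightarrow> real)
    \<Rightarrow> ('a \<Rightarrow> real) \<Rightarrow> ('b \<Rightarrow> real) \<Rightarrow> real" where
  "exp_pay A1 A2 u p q = (\<Sum>a\<in>A1. \<Sum>b\<in>A2. p a * q b * u a b)"

definition stage_nash :: "regime \<Rightarrow> 'a set \<Rightarrow> 'b set \<Rightarrow> ('a \<Rightarrow> 'b \<Rightarrow> real)
    \<Rightarrow> ('a \<Rightarrow> 'b \<Rightarrow> real) \<Rightarrow> (('a \<Rightarrow> real) \<times> ('b \<Rightarrow> real)) set" where
  "stage_nash r A1 A2 u1 u2 = {(p, q). p \<in> avail (fst r) A1 \<and> q \<in> avail (snd r) A2 \<and>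
      (\<forall>p'\<in>avail (fst r) A1. exp_pay A1 A2 u1 p' q \<le> exp_pay A1 A2 u1 p q) \<and>
      (\<forall>q'\<in>avail (snd r) A2. exp_pay A1 A2 u2 p q' \<le> exp_pay A1 A2 u2 p q)}"

definition nash_vals1 :: "regime \<Rightarrow> 'a set \<Rightarrow> 'b set \<Rightarrow> ('a \<Rightarrow> 'b \<Rightarrow> real)
    \<Rightarrow> ('a \<Rightarrow> 'b \<Rightarrow> real) \<Rightarrow> real set" where
  "nash_vals1 r A1 A2 u1 u2 = (\<lambda>(p, q). exp_pay A1 A2 u1 p q) ` stage_nash r A1 A2 u1 u2"

definition nash_vals2 :: "regime \<Rightarrow> 'a set \<Rightarrow> 'b set \<Rightarrow> ('a \<Rightarrow> 'b \<Rightarrow> real)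
    \<Rightarrow> ('a \<Rightarrow> 'b \<Rightarrow> real) \<Rightarrow> real set" where
  "nash_vals2 r A1 A2 u1 u2 = (\<lambda>(p, q). exp_pay A1 A2 u2 p q) ` stage_nash r A1 A2 u1 u2"

text \<open>Repeated game. Histories are lists of realized action profiles (oldest first).
A behaviour strategy maps histories to stage strategies available in the regime.\<close>
type_synonym ('a, 'b) hist = "('a \<times> 'b) list"

definition is_strategy :: "bool \<Rightarrow> 'x set \<Rightarrow> (('a, 'b) hist \<Rightarrow> 'x \<Rightarrow> real) \<Rightarrow> bool" where
  "is_strategy mix A \<sigma> \<longleftrightarrow> (\<forall>h. \<sigma> h \<in> avail mix A)"

definition valid_hist :: "'a set \<Rightarrow> 'b set \<Rightarrow> nat \<Rightarrow> ('a, 'b) hist \<Rightarrow> bool" where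
  "valid_hist A1 A2 T h \<longleftrightarrow> set h \<subseteq> A1 \<times> A2 \<and> length h < T"

fun cont_val :: "'a set \<Rightarrow> 'b set \<Rightarrow> ('a \<Rightarrow> 'b \<Rightarrow> real)
    \<Rightarrow> (('a, 'b) hist \<Rightarrow> 'a \<Rightarrow> real) \<Rightarrow> (('a, 'b) hist \<Rightarrow> 'b \<Rightarrow> real)
    \<Rightarrow> nat \<Rightarrow> ('a, 'b) hist \<Rightarrow> real" where
  "cont_val A1 A2 u \<sigma>1 \<sigma>2 0 h = 0"
| "cont_val A1 A2 u \<sigma>1 \<sigma>2 (Suc n) h =
     (\<Sum>a\<in>A1. \<Sum>b\<in>A2. \<sigma>1 h a * \<sigma>2 h b * (u a b + cont_val A1 A2 u \<sigma>1 \<sigma>2 n (h @ [(a, b)])))"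

definition is_SPE :: "regime \<Rightarrow> 'a set \<Rightarrow> 'b set \<Rightarrow> ('a \<Rightarrow> 'b \<Rightarrow> real)
    \<Rightarrow> ('a \<Rightarrow> 'b \<Rightarrow> real) \<Rightarrow> nat
    \<Rightarrow> (('a, 'b) hist \<Rightarrow> 'a \<Rightarrow> real) \<Rightarrow> (('a, 'b) hist \<Rightarrow> 'b \<Rightarrow> real) \<Rightarrow> bool" where
  "is_SPE r A1 A2 u1 u2 T \<sigma>1 \<sigma>2 \<longleftrightarrow>
     is_strategy (fst r) A1 \<sigma>1 \<and> is_strategy (snd r) A2 \<sigma>2 \<and>
     (\<forall>h. valid_hist A1 A2 T h \<longrightarrow>
        (\<forall>\<tau>1. is_strategy (fst r) A1 \<tau>1 \<longrightarrow>
           cont_val A1 A2 u1 \<tau>1 \<sigma>2 (T - length h) h \<le> cont_val A1 A2 u1 \<sigma>1 \<sigma>2 (T - length h) h) \<and>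
        (\<forall>\<tau>2. is_strategy (snd r) A2 \<tau>2 \<longrightarrow>
           cont_val A1 A2 u2 \<sigma>1 \<tau>2 (T - length h) h \<le> cont_val A1 A2 u2 \<sigma>1 \<sigma>2 (T - length h) h))"

definition locally_suboptimal :: "regime \<Rightarrow> 'a set \<Rightarrow> 'b set \<Rightarrow> ('a \<Rightarrow> 'b \<Rightarrow> real)
    \<Rightarrow> ('a \<Rightarrow> 'b \<Rightarrow> real) \<Rightarrow> nat
    \<Rightarrow> (('a, 'b) hist \<Rightarrow> 'a \<Rightarrow> real) \<Rightarrow> (('a, 'b) hist \<Rightarrow> 'b \<Rightarrow> real) \<Rightarrow> bool" where
  "locally_suboptimal r A1 A2 u1 u2 T \<sigma>1 \<sigma>2 \<longleftrightarrow>
     (\<exists>h. valid_hist A1 A2 T h \<and> (\<sigma>1 h, \<sigma>2 h) \<notin> stage_nash r A1 A2 u1 u2)"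

definition in_G_LS :: "regime \<Rightarrow> 'a set \<Rightarrow> 'b set \<Rightarrow> ('a \<Rightarrow> 'b \<Rightarrow> real)
    \<Rightarrow> ('a \<Rightarrow> 'b \<Rightarrow> real) \<Rightarrow> bool" where
  "in_G_LS r A1 A2 u1 u2 \<longleftrightarrow>
     (\<exists>T\<ge>1. \<exists>\<sigma>1 \<sigma>2. is_SPE r A1 A2 u1 u2 T \<sigma>1 \<sigma>2 \<and>
        locally_suboptimal r A1 A2 u1 u2 T \<sigma>1 \<sigma>2)"

end

theory Submission
  imports Defs
begin

text \<open>If \<open>G\<close> has an equilibrium with a locally suboptimal profile when both players mix, then
  not every pure profile is an equilibrium with player 2 restricted to pure actions:
  otherwise no player's payoff would depend on his own action and every profile would be an
  equilibrium.  Take such a pure profile \<open>(a0, b0)\<close> and play it in the first round.  Afterwards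
  only stage equilibria are played, so no later deviation pays; a first-round deviation by
  player 1 is deterred by \<open>n\<close> rounds of his worse instead of his better equilibrium value, and
  then a deviation by player 2 likewise by \<open>n\<close> rounds; for \<open>n\<close> large this outweighs the
  one-round gain.\<close>

lemma is_mixed_point_mass: "finite A \<Longrightarrow> a \<in> A \<Longrightarrow> is_mixed A (point_mass a)"
  unfolding is_mixed_def point_mass_def by auto

lemma point_mass_in_avail: "finite A \<Longrightarrow> a \<in> A \<Longrightarrow> point_mass a \<in> avail mix A"
  unfolding avail_def by (auto intro: is_mixed_point_mass)

lemma is_mixed_if_in_avail: "finite A \<Longrightarrow> p \<in> avail mix A \<Longrightarrow> is_mixed A p"
  unfolding avail_def by (auto split: if_splits intro: is_mixed_point_mass)

lemma sum_sum_point_mass: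
  assumes "finite A1" "finite A2" "a0 \<in> A1" "b0 \<in> A2"
  shows "(\<Sum>a\<in>A1. \<Sum>b\<in>A2. point_mass a0 a * point_mass b0 b * f a b) = f a0 b0"
proof -
  have "point_mass a0 a * point_mass b0 b * f a b = (if a = a0 then if b = b0 then f a b else 0 else 0)"
    for a b by (simp add: point_mass_def)
  moreover have "(\<Sum>b\<in>A2. if a = a0 then if b = b0 then f a b else 0 else 0) = (if a = a0 then f a b0 else 0)"
    for a using assms by auto
  ultimately show ?thesis using assms by simp
qed

lemma exp_pay_point_mass:
  "finite A1 \<Longrightarrow> finite A2 \<Longrightarrow> a \<in> A1 \<Longrightarrow> b \<in> A2 \<Longrightarrow>
    exp_pay A1 A2 u (point_mass a) (point_mass b) = u a b"
  unfolding exp_pay_def by (rule sum_sum_point_mass)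

lemma sum_sum_mixed_add_const:
  assumes "is_mixed A1 p" "is_mixed A2 q" "finite A1" "finite A2"
  shows "(\<Sum>a\<in>A1. \<Sum>b\<in>A2. p a * q b * (f a b + c)) = (\<Sum>a\<in>A1. \<Sum>b\<in>A2. p a * q b * f a b) + c"
proof -
  have "(\<Sum>a\<in>A1. \<Sum>b\<in>A2. p a * q b * c) = (\<Sum>a\<in>A1. p a) * (\<Sum>b\<in>A2. q b * c)"
    by (simp add: sum_product mult.assoc)
  with assms show ?thesis
    by (simp add: distrib_left sum.distrib is_mixed_def flip: sum_distrib_right)
qed

lemma sum_sum_mixed_le:
  assumes "is_mixed A1 p" "is_mixed A2 q" "finite A1" "finite A2"
    and "\<And>a b. a \<in> A1 \<Longrightarrow> b \<in> A2 \<Longrightarrow> p a \<noteq> 0 \<Longrightarrow> q b \<noteq> 0 \<Longrightarrow> f a b \<le> C"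
  shows "(\<Sum>a\<in>A1. \<Sum>b\<in>A2. p a * q b * f a b) \<le> C"
proof -
  have "(\<Sum>a\<in>A1. \<Sum>b\<in>A2. p a * q b * f a b) \<le> (\<Sum>a\<in>A1. \<Sum>b\<in>A2. p a * q b * (0 + C))"
  proof (intro sum_mono)
    fix a b assume "a \<in> A1" "b \<in> A2"
    moreover have "0 \<le> p a * q b" using assms(1,2) by (simp add: is_mixed_def)
    ultimately show "p a * q b * f a b \<le> p a * q b * (0 + C)"
      using assms(5) by (cases "p a = 0 \<or> q b = 0") (auto intro: mult_left_mono)
  qed
  also have "\<dots> = C" using sum_sum_mixed_add_const[OF assms(1-4), of "\<lambda>_ _. 0"] by simp
  finally show ?thesis .
qed

lemma pure_Nash_no_gain1:
  assumes "finite A1" "(point_mass a, point_mass b) \<in> stage_nash r A1 A2 u1 u2"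
    and "finite A2" "a \<in> A1" "a' \<in> A1" "b \<in> A2"
  shows "u1 a' b \<le> u1 a b"
  using assms point_mass_in_avail[OF assms(1,5), of "fst r"]
  by (auto simp: stage_nash_def exp_pay_point_mass)

lemma pure_Nash_no_gain2:
  assumes "finite A1" "(point_mass a, point_mass b) \<in> stage_nash r A1 A2 u1 u2"
    and "finite A2" "a \<in> A1" "b \<in> A2" "b' \<in> A2"
  shows "u2 a b' \<le> u2 a b"
  using assms point_mass_in_avail[OF assms(3,6), of "snd r"]
  by (auto simp: stage_nash_def exp_pay_point_mass)

lemma exp_pay_if_indep_fst:
  assumes "\<And>a b. a \<in> A1 \<Longrightarrow> b \<in> A2 \<Longrightarrow> u a b = w b" "is_mixed A1 p"
  shows "exp_pay A1 A2 u p q = (\<Sum>b\<in>A2. q b * w b)"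
proof -
  have "exp_pay A1 A2 u p q = (\<Sum>a\<in>A1. \<Sum>b\<in>A2. p a * (q b * w b))"
    unfolding exp_pay_def using assms(1) by (intro sum.cong) auto
  also have "\<dots> = (\<Sum>a\<in>A1. p a) * (\<Sum>b\<in>A2. q b * w b)"
    by (simp add: sum_product)
  finally show ?thesis using assms(2) by (simp add: is_mixed_def)
qed

lemma exp_pay_if_indep_snd:
  assumes "\<And>a b. a \<in> A1 \<Longrightarrow> b \<in> A2 \<Longrightarrow> u a b = w a" "is_mixed A2 q"
  shows "exp_pay A1 A2 u p q = (\<Sum>a\<in>A1. p a * w a)"
proof -
  have "exp_pay A1 A2 u p q = (\<Sum>a\<in>A1. \<Sum>b\<in>A2. (p a * w a) * q b)"
    unfolding exp_pay_def using assms(1) by (intro sum.cong) auto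
  also have "\<dots> = (\<Sum>a\<in>A1. p a * w a) * (\<Sum>b\<in>A2. q b)"
    by (simp add: sum_product)
  finally show ?thesis using assms(2) by (simp add: is_mixed_def)
qed

lemma stage_nash_eq_if_pure_profiles_Nash:
  assumes fin: "finite A1" "finite A2" and ne: "A1 \<noteq> {}" "A2 \<noteq> {}"
    and pure: "\<And>a b. a \<in> A1 \<Longrightarrow> b \<in> A2 \<Longrightarrow> (point_mass a, point_mass b) \<in> stage_nash r A1 A2 u1 u2"
  shows "stage_nash r' A1 A2 u1 u2 = avail (fst r') A1 \<times> avail (snd r') A2"
proof -
  obtain a1 b1 where a1: "a1 \<in> A1" and b1: "b1 \<in> A2" using ne by blast
  have "u1 a b = u1 a1 b" if "a \<in> A1" "b \<in> A2" for a b
    using pure_Nash_no_gain1[OF fin(1) pure[OF that] fin(2) that(1) a1 that(2)]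
      pure_Nash_no_gain1[OF fin(1) pure[OF a1 that(2)] fin(2) a1 that] by simp
  then have e1: "exp_pay A1 A2 u1 p q = (\<Sum>b\<in>A2. q b * u1 a1 b)" if "p \<in> avail (fst r') A1" for p q
    using that fin(1) by (intro exp_pay_if_indep_fst) (auto intro: is_mixed_if_in_avail)
  have "u2 a b = u2 a b1" if "a \<in> A1" "b \<in> A2" for a b
    using pure_Nash_no_gain2[OF fin(1) pure[OF that] fin(2) that b1]
      pure_Nash_no_gain2[OF fin(1) pure[OF that(1) b1] fin(2) that(1) b1 that(2)] by simp
  then have e2: "exp_pay A1 A2 u2 p q = (\<Sum>a\<in>A1. p a * u2 a b1)" if "q \<in> avail (snd r') A2" for p q
    using that fin(2) by (intro exp_pay_if_indep_snd) (auto intro: is_mixed_if_in_avail)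
  show ?thesis
    unfolding stage_nash_def by (auto simp: e1 e2)
qed

lemma exists_pure_non_Nash_if_in_G_LS:
  assumes "finite A1" "finite A2" "A1 \<noteq> {}" "A2 \<noteq> {}" "in_G_LS r' A1 A2 u1 u2"
  shows "\<exists>a\<in>A1. \<exists>b\<in>A2. (point_mass a, point_mass b) \<notin> stage_nash r A1 A2 u1 u2"
proof (rule ccontr)
  assume "\<not> ?thesis"
  then have "stage_nash r' A1 A2 u1 u2 = avail (fst r') A1 \<times> avail (snd r') A2"
    using assms(1-4) by (intro stage_nash_eq_if_pure_profiles_Nash) auto
  with assms(5) show False
    by (auto simp: in_G_LS_def locally_suboptimal_def is_SPE_def is_strategy_def)
qed

lemma exists_less_if_two_values:
  fixes f :: "'x \<Rightarrow> 'y::linorder"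
  assumes "\<exists>x\<in>f ` S. \<exists>y\<in>f ` S. x \<noteq> y"
  obtains L H where "L \<in> S" "H \<in> S" "f L < f H"
  using assms by (metis image_iff linorder_neq_iff)

lemma cont_val_le_sum_stage_bounds:
  assumes fin: "finite A1" "finite A2"
    and mixed: "\<And>h. h \<noteq> [] \<Longrightarrow> is_mixed A1 (\<tau>1 h) \<and> is_mixed A2 (\<tau>2 h)"
    and stage: "\<And>h. h \<noteq> [] \<Longrightarrow> exp_pay A1 A2 u (\<tau>1 h) (\<tau>2 h) \<le> v (hd h) (length h)"
    and "h \<noteq> []"
  shows "cont_val A1 A2 u \<tau>1 \<tau>2 n h \<le> (\<Sum>k = length h..<length h + n. v (hd h) k)"
  using \<open>h \<noteq> []\<close>
proof (induction n arbitrary: h)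
  case 0
  then show ?case by simp
next
  case (Suc n)
  define rest where "rest = (\<Sum>k = Suc (length h)..<length h + Suc n. v (hd h) k)"
  have IH: "cont_val A1 A2 u \<tau>1 \<tau>2 n (h @ [(a, b)]) \<le> rest" for a b
    using Suc.IH[of "h @ [(a, b)]"] Suc.prems by (simp add: rest_def)
  have p: "is_mixed A1 (\<tau>1 h)" and q: "is_mixed A2 (\<tau>2 h)" using mixed Suc.prems by auto
  have "cont_val A1 A2 u \<tau>1 \<tau>2 (Suc n) h
      \<le> (\<Sum>a\<in>A1. \<Sum>b\<in>A2. \<tau>1 h a * \<tau>2 h b * (u a b + rest))"
    unfolding cont_val.simps
    using p q by (intro sum_mono mult_left_mono add_left_mono IH) (auto simp: is_mixed_def)
  also have "\<dots> = exp_pay A1 A2 u (\<tau>1 h) (\<tau>2 h) + rest"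
    by (simp add: sum_sum_mixed_add_const[OF p q fin] exp_pay_def)
  also have "\<dots> \<le> v (hd h) (length h) + rest"
    using stage Suc.prems by simp
  also have "\<dots> = (\<Sum>k = length h..<length h + Suc n. v (hd h) k)"
    by (simp add: rest_def sum.atLeast_Suc_lessThan)
  finally show ?case .
qed

lemma cont_val_eq_sum_stage_values:
  assumes fin: "finite A1" "finite A2"
    and mixed: "\<And>h. h \<noteq> [] \<Longrightarrow> is_mixed A1 (\<sigma>1 h) \<and> is_mixed A2 (\<sigma>2 h)"
    and stage: "\<And>h. h \<noteq> [] \<Longrightarrow> exp_pay A1 A2 u (\<sigma>1 h) (\<sigma>2 h) = v (hd h) (length h)"
    and "h \<noteq> []"
  shows "cont_val A1 A2 u \<sigma>1 \<sigma>2 n h = (\<Sum>k = length h..<length h + n. v (hd h) k)"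
  using \<open>h \<noteq> []\<close>
proof (induction n arbitrary: h)
  case 0
  then show ?case by simp
next
  case (Suc n)
  define rest where "rest = (\<Sum>k = Suc (length h)..<length h + Suc n. v (hd h) k)"
  have p: "is_mixed A1 (\<sigma>1 h)" and q: "is_mixed A2 (\<sigma>2 h)" using mixed Suc.prems by auto
  have "cont_val A1 A2 u \<sigma>1 \<sigma>2 (Suc n) h
      = (\<Sum>a\<in>A1. \<Sum>b\<in>A2. \<sigma>1 h a * \<sigma>2 h b * (u a b + rest))"
    using Suc by (simp add: rest_def)
  also have "\<dots> = exp_pay A1 A2 u (\<sigma>1 h) (\<sigma>2 h) + rest"
    by (simp add: sum_sum_mixed_add_const[OF p q fin] exp_pay_def)
  also have "\<dots> = (\<Sum>k = length h..<length h + Suc n. v (hd h) k)"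
    using stage Suc.prems by (simp add: rest_def sum.atLeast_Suc_lessThan)
  finally show ?case .
qed

text \<open>Play \<open>s\<close> in the first round; in round \<open>k + 1\<close> play the stage strategy \<open>F c k\<close>,
  where \<open>c\<close> is the action profile realised in the first round.\<close>
definition scheduled_strategy :: "('x \<Rightarrow> real) \<Rightarrow> ('a \<times> 'b \<Rightarrow> nat \<Rightarrow> 'x \<Rightarrow> real)
    \<Rightarrow> ('a, 'b) hist \<Rightarrow> 'x \<Rightarrow> real" where
  "scheduled_strategy s F h = (if h = [] then s else F (hd h) (length h))"

lemma is_strategy_scheduled_strategy:
  "s \<in> avail mix A \<Longrightarrow> (\<And>c k. F c k \<in> avail mix A) \<Longrightarrow> is_strategy mix A (scheduled_strategy s F)"
  unfolding is_strategy_def scheduled_strategy_def by simp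

context
  fixes r :: regime and A1 :: "'a set" and A2 :: "'b set" and u1 u2 :: "'a \<Rightarrow> 'b \<Rightarrow> real"
    and F1 :: "'a \<times> 'b \<Rightarrow> nat \<Rightarrow> 'a \<Rightarrow> real" and F2 :: "'a \<times> 'b \<Rightarrow> nat \<Rightarrow> 'b \<Rightarrow> real"
  assumes fin: "finite A1" "finite A2"
    and schedule_Nash: "\<And>c k. (F1 c k, F2 c k) \<in> stage_nash r A1 A2 u1 u2"
begin

lemma schedule_mixed: "is_mixed A1 (F1 c k)" "is_mixed A2 (F2 c k)"
  using schedule_Nash[of c k] fin by (auto simp: stage_nash_def intro: is_mixed_if_in_avail)

lemma cont_val_scheduled_strategies:
  assumes "h \<noteq> []"
  shows "cont_val A1 A2 u (scheduled_strategy s1 F1) (scheduled_strategy s2 F2) n h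
    = (\<Sum>k = length h..<length h + n. exp_pay A1 A2 u (F1 (hd h) k) (F2 (hd h) k))"
  by (rule cont_val_eq_sum_stage_values[OF fin _ _ assms])
    (simp_all add: scheduled_strategy_def schedule_mixed)

lemma scheduled_deviation1_bound:
  assumes "is_strategy (fst r) A1 \<tau>1" "h \<noteq> []"
  shows "cont_val A1 A2 u1 \<tau>1 (scheduled_strategy s2 F2) n h
    \<le> (\<Sum>k = length h..<length h + n. exp_pay A1 A2 u1 (F1 (hd h) k) (F2 (hd h) k))"
proof (rule cont_val_le_sum_stage_bounds[OF fin _ _ assms(2)])
  fix h' :: "('a, 'b) hist" assume "h' \<noteq> []"
  have "\<tau>1 h' \<in> avail (fst r) A1" using assms(1) by (simp add: is_strategy_def)
  with \<open>h' \<noteq> []\<close> show "is_mixed A1 (\<tau>1 h') \<and> is_mixed A2 (scheduled_strategy s2 F2 h')"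
    and "exp_pay A1 A2 u1 (\<tau>1 h') (scheduled_strategy s2 F2 h')
      \<le> exp_pay A1 A2 u1 (F1 (hd h') (length h')) (F2 (hd h') (length h'))"
    using schedule_Nash fin
    by (auto simp: scheduled_strategy_def schedule_mixed stage_nash_def intro: is_mixed_if_in_avail)
qed

lemma scheduled_deviation2_bound:
  assumes "is_strategy (snd r) A2 \<tau>2" "h \<noteq> []"
  shows "cont_val A1 A2 u2 (scheduled_strategy s1 F1) \<tau>2 n h
    \<le> (\<Sum>k = length h..<length h + n. exp_pay A1 A2 u2 (F1 (hd h) k) (F2 (hd h) k))"
proof (rule cont_val_le_sum_stage_bounds[OF fin _ _ assms(2)])
  fix h' :: "('a, 'b) hist" assume "h' \<noteq> []"
  have "\<tau>2 h' \<in> avail (snd r) A2" using assms(1) by (simp add: is_strategy_def)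
  with \<open>h' \<noteq> []\<close> show "is_mixed A1 (scheduled_strategy s1 F1 h') \<and> is_mixed A2 (\<tau>2 h')"
    and "exp_pay A1 A2 u2 (scheduled_strategy s1 F1 h') (\<tau>2 h')
      \<le> exp_pay A1 A2 u2 (F1 (hd h') (length h')) (F2 (hd h') (length h'))"
    using schedule_Nash fin
    by (auto simp: scheduled_strategy_def schedule_mixed stage_nash_def intro: is_mixed_if_in_avail)
qed

lemma scheduled_first_round_deviation1:
  assumes a0: "a0 \<in> A1" and b0: "b0 \<in> A2" and \<tau>1: "is_strategy (fst r) A1 \<tau>1"
    and incentive: "\<And>a. a \<in> A1 \<Longrightarrow>
      u1 a b0 + (\<Sum>k = 1..n. exp_pay A1 A2 u1 (F1 (a, b0) k) (F2 (a, b0) k))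
      \<le> u1 a0 b0 + (\<Sum>k = 1..n. exp_pay A1 A2 u1 (F1 (a0, b0) k) (F2 (a0, b0) k))"
  shows "cont_val A1 A2 u1 \<tau>1 (scheduled_strategy (point_mass b0) F2) (Suc n) []
    \<le> cont_val A1 A2 u1 (scheduled_strategy (point_mass a0) F1) (scheduled_strategy (point_mass b0) F2) (Suc n) []"
proof -
  let ?\<sigma>1 = "scheduled_strategy (point_mass a0) F1" and ?\<sigma>2 = "scheduled_strategy (point_mass b0) F2"
  let ?V = "\<lambda>c. \<Sum>k = 1..n. exp_pay A1 A2 u1 (F1 c k) (F2 c k)"
  have "cont_val A1 A2 u1 \<tau>1 ?\<sigma>2 (Suc n) []
      = (\<Sum>a\<in>A1. \<Sum>b\<in>A2. \<tau>1 [] a * point_mass b0 b * (u1 a b + cont_val A1 A2 u1 \<tau>1 ?\<sigma>2 n [(a, b)]))"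
    by (simp add: scheduled_strategy_def)
  also have "\<dots> \<le> u1 a0 b0 + ?V (a0, b0)"
  proof (rule sum_sum_mixed_le[OF _ _ fin])
    show "is_mixed A1 (\<tau>1 [])" "is_mixed A2 (point_mass b0)"
      using \<tau>1 fin b0 by (auto simp: is_strategy_def intro: is_mixed_if_in_avail is_mixed_point_mass)
    fix a b assume "a \<in> A1" "b \<in> A2" "point_mass b0 b \<noteq> 0"
    moreover have "cont_val A1 A2 u1 \<tau>1 ?\<sigma>2 n [(a, b)] \<le> ?V (a, b)"
      using scheduled_deviation1_bound[OF \<tau>1, of "[(a, b)]"] by (simp add: atLeastLessThanSuc_atLeastAtMost)
    ultimately show "u1 a b + cont_val A1 A2 u1 \<tau>1 ?\<sigma>2 n [(a, b)] \<le> u1 a0 b0 + ?V (a0, b0)"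
      using incentive by (fastforce simp: point_mass_def split: if_splits)
  qed
  also have "\<dots> = cont_val A1 A2 u1 ?\<sigma>1 ?\<sigma>2 (Suc n) []"
    using sum_sum_point_mass[OF fin a0 b0]
    by (simp add: scheduled_strategy_def cont_val_scheduled_strategies atLeastLessThanSuc_atLeastAtMost)
  finally show ?thesis .
qed

lemma scheduled_first_round_deviation2:
  assumes a0: "a0 \<in> A1" and b0: "b0 \<in> A2" and \<tau>2: "is_strategy (snd r) A2 \<tau>2"
    and incentive: "\<And>b. b \<in> A2 \<Longrightarrow>
      u2 a0 b + (\<Sum>k = 1..n. exp_pay A1 A2 u2 (F1 (a0, b) k) (F2 (a0, b) k))
      \<le> u2 a0 b0 + (\<Sum>k = 1..n. exp_pay A1 A2 u2 (F1 (a0, b0) k) (F2 (a0, b0) k))"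
  shows "cont_val A1 A2 u2 (scheduled_strategy (point_mass a0) F1) \<tau>2 (Suc n) []
    \<le> cont_val A1 A2 u2 (scheduled_strategy (point_mass a0) F1) (scheduled_strategy (point_mass b0) F2) (Suc n) []"
proof -
  let ?\<sigma>1 = "scheduled_strategy (point_mass a0) F1" and ?\<sigma>2 = "scheduled_strategy (point_mass b0) F2"
  let ?V = "\<lambda>c. \<Sum>k = 1..n. exp_pay A1 A2 u2 (F1 c k) (F2 c k)"
  have "cont_val A1 A2 u2 ?\<sigma>1 \<tau>2 (Suc n) []
      = (\<Sum>a\<in>A1. \<Sum>b\<in>A2. point_mass a0 a * \<tau>2 [] b * (u2 a b + cont_val A1 A2 u2 ?\<sigma>1 \<tau>2 n [(a, b)]))"
    by (simp add: scheduled_strategy_def)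
  also have "\<dots> \<le> u2 a0 b0 + ?V (a0, b0)"
  proof (rule sum_sum_mixed_le[OF _ _ fin])
    show "is_mixed A1 (point_mass a0)" "is_mixed A2 (\<tau>2 [])"
      using \<tau>2 fin a0 by (auto simp: is_strategy_def intro: is_mixed_if_in_avail is_mixed_point_mass)
    fix a b assume "a \<in> A1" "b \<in> A2" "point_mass a0 a \<noteq> 0"
    moreover have "cont_val A1 A2 u2 ?\<sigma>1 \<tau>2 n [(a, b)] \<le> ?V (a, b)"
      using scheduled_deviation2_bound[OF \<tau>2, of "[(a, b)]"] by (simp add: atLeastLessThanSuc_atLeastAtMost)
    ultimately show "u2 a b + cont_val A1 A2 u2 ?\<sigma>1 \<tau>2 n [(a, b)] \<le> u2 a0 b0 + ?V (a0, b0)"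
      using incentive by (fastforce simp: point_mass_def split: if_splits)
  qed
  also have "\<dots> = cont_val A1 A2 u2 ?\<sigma>1 ?\<sigma>2 (Suc n) []"
    using sum_sum_point_mass[OF fin a0 b0]
    by (simp add: scheduled_strategy_def cont_val_scheduled_strategies atLeastLessThanSuc_atLeastAtMost)
  finally show ?thesis .
qed

lemma is_SPE_scheduled_strategies:
  assumes a0: "a0 \<in> A1" and b0: "b0 \<in> A2"
    and incentive1: "\<And>a. a \<in> A1 \<Longrightarrow>
      u1 a b0 + (\<Sum>k = 1..n. exp_pay A1 A2 u1 (F1 (a, b0) k) (F2 (a, b0) k))
      \<le> u1 a0 b0 + (\<Sum>k = 1..n. exp_pay A1 A2 u1 (F1 (a0, b0) k) (F2 (a0, b0) k))"
    and incentive2: "\<And>b. b \<in> A2 \<Longrightarrow>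
      u2 a0 b + (\<Sum>k = 1..n. exp_pay A1 A2 u2 (F1 (a0, b) k) (F2 (a0, b) k))
      \<le> u2 a0 b0 + (\<Sum>k = 1..n. exp_pay A1 A2 u2 (F1 (a0, b0) k) (F2 (a0, b0) k))"
  shows "is_SPE r A1 A2 u1 u2 (Suc n)
    (scheduled_strategy (point_mass a0) F1) (scheduled_strategy (point_mass b0) F2)"
  unfolding is_SPE_def
proof (intro conjI allI impI)
  show "is_strategy (fst r) A1 (scheduled_strategy (point_mass a0) F1)"
    "is_strategy (snd r) A2 (scheduled_strategy (point_mass b0) F2)"
    using schedule_Nash fin a0 b0
    by (auto intro!: is_strategy_scheduled_strategy point_mass_in_avail simp: stage_nash_def)
next
  fix h :: "('a, 'b) hist" and \<tau>1 \<tau>2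
  show "cont_val A1 A2 u1 \<tau>1 (scheduled_strategy (point_mass b0) F2) (Suc n - length h) h
    \<le> cont_val A1 A2 u1 (scheduled_strategy (point_mass a0) F1)
        (scheduled_strategy (point_mass b0) F2) (Suc n - length h) h"
    if "is_strategy (fst r) A1 \<tau>1"
    using that scheduled_first_round_deviation1[OF a0 b0 that incentive1]
      scheduled_deviation1_bound[OF that] cont_val_scheduled_strategies
    by (cases "h = []") auto
  show "cont_val A1 A2 u2 (scheduled_strategy (point_mass a0) F1) \<tau>2 (Suc n - length h) h
    \<le> cont_val A1 A2 u2 (scheduled_strategy (point_mass a0) F1)
        (scheduled_strategy (point_mass b0) F2) (Suc n - length h) h"
    if "is_strategy (snd r) A2 \<tau>2"
    using that scheduled_first_round_deviation2[OF a0 b0 that incentive2]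
      scheduled_deviation2_bound[OF that] cont_val_scheduled_strategies
    by (cases "h = []") auto
qed

end

definition reward_schedule :: "'a \<Rightarrow> 'b \<Rightarrow> nat \<Rightarrow> 'p \<Rightarrow> 'p \<Rightarrow> 'p \<Rightarrow> 'p \<Rightarrow> 'a \<times> 'b \<Rightarrow> nat \<Rightarrow> 'p" where
  "reward_schedule a0 b0 n L1 H1 L2 H2 c k =
     (if k \<le> n then if fst c = a0 then H1 else L1 else if snd c = b0 then H2 else L2)"

lemma sum_reward_schedule:
  fixes f :: "'p \<Rightarrow> real"
  shows "(\<Sum>k = 1..n + n. f (reward_schedule a0 b0 n L1 H1 L2 H2 c k))
    = real n * f (if fst c = a0 then H1 else L1) + real n * f (if snd c = b0 then H2 else L2)"
proof -
  have "(\<Sum>k = 1..n. f (reward_schedule a0 b0 n L1 H1 L2 H2 c k))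
      = (\<Sum>k = 1..n. f (if fst c = a0 then H1 else L1))"
    by (rule sum.cong) (auto simp: reward_schedule_def)
  moreover have "(\<Sum>k = n + 1..n + n. f (reward_schedule a0 b0 n L1 H1 L2 H2 c k))
      = (\<Sum>k = n + 1..n + n. f (if snd c = b0 then H2 else L2))"
    by (rule sum.cong) (auto simp: reward_schedule_def)
  moreover have "(\<Sum>k = 1..n + n. f (reward_schedule a0 b0 n L1 H1 L2 H2 c k))
      = (\<Sum>k = 1..n. f (reward_schedule a0 b0 n L1 H1 L2 H2 c k))
        + (\<Sum>k = n + 1..n + n. f (reward_schedule a0 b0 n L1 H1 L2 H2 c k))"
    by (rule sum.ub_add_nat) simp
  ultimately show ?thesis
    by simp
qed

lemma eventually_bounded_by_multiple:
  fixes f :: "'a \<Rightarrow> real"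
  assumes "finite A" "0 < d"
  shows "\<forall>\<^sub>F n in sequentially. \<forall>a\<in>A. f a \<le> real n * d"
proof (rule eventually_ball_finite[OF assms(1)], intro ballI)
  fix a
  have "\<forall>\<^sub>F n in sequentially. f a / d \<le> real n"
    using filterlim_real_sequentially by (simp add: filterlim_at_top)
  then show "\<forall>\<^sub>F n in sequentially. f a \<le> real n * d"
    by eventually_elim (simp add: pos_divide_le_eq assms(2))
qed

lemma in_G_LS_if_pure_non_Nash:
  assumes fin: "finite A1" "finite A2" and a0: "a0 \<in> A1" and b0: "b0 \<in> A2"
    and non_Nash: "(point_mass a0, point_mass b0) \<notin> stage_nash r A1 A2 u1 u2"
    and Nash: "L1 \<in> stage_nash r A1 A2 u1 u2" "H1 \<in> stage_nash r A1 A2 u1 u2"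
      "L2 \<in> stage_nash r A1 A2 u1 u2" "H2 \<in> stage_nash r A1 A2 u1 u2"
    and less1: "exp_pay A1 A2 u1 (fst L1) (snd L1) < exp_pay A1 A2 u1 (fst H1) (snd H1)"
    and less2: "exp_pay A1 A2 u2 (fst L2) (snd L2) < exp_pay A1 A2 u2 (fst H2) (snd H2)"
  shows "in_G_LS r A1 A2 u1 u2"
proof -
  define e1 where "e1 P = exp_pay A1 A2 u1 (fst P) (snd P)" for P :: "('a \<Rightarrow> real) \<times> ('b \<Rightarrow> real)"
  define e2 where "e2 P = exp_pay A1 A2 u2 (fst P) (snd P)" for P :: "('a \<Rightarrow> real) \<times> ('b \<Rightarrow> real)"
  have "\<forall>\<^sub>F n in sequentially. (\<forall>a\<in>A1. u1 a b0 - u1 a0 b0 \<le> real n * (e1 H1 - e1 L1))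
      \<and> (\<forall>b\<in>A2. u2 a0 b - u2 a0 b0 \<le> real n * (e2 H2 - e2 L2))"
    using less1 less2 fin
    by (intro eventually_conj eventually_bounded_by_multiple) (auto simp: e1_def e2_def)
  then obtain n where
    n1: "\<And>a. a \<in> A1 \<Longrightarrow> u1 a b0 - u1 a0 b0 \<le> real n * (e1 H1 - e1 L1)" and
    n2: "\<And>b. b \<in> A2 \<Longrightarrow> u2 a0 b - u2 a0 b0 \<le> real n * (e2 H2 - e2 L2)"
    by (auto simp: eventually_sequentially)
  define P where "P = reward_schedule a0 b0 n L1 H1 L2 H2"
  define \<sigma>1 where "\<sigma>1 = scheduled_strategy (point_mass a0) (\<lambda>c k. fst (P c k))"
  define \<sigma>2 where "\<sigma>2 = scheduled_strategy (point_mass b0) (\<lambda>c k. snd (P c k))"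
  have "is_SPE r A1 A2 u1 u2 (Suc (n + n)) \<sigma>1 \<sigma>2"
    unfolding \<sigma>1_def \<sigma>2_def
  proof (rule is_SPE_scheduled_strategies[OF fin _ a0 b0])
    show "(fst (P c k), snd (P c k)) \<in> stage_nash r A1 A2 u1 u2" for c k
      using Nash by (simp add: P_def reward_schedule_def)
    show "u1 a b0 + (\<Sum>k = 1..n + n. exp_pay A1 A2 u1 (fst (P (a, b0) k)) (snd (P (a, b0) k)))
        \<le> u1 a0 b0 + (\<Sum>k = 1..n + n. exp_pay A1 A2 u1 (fst (P (a0, b0) k)) (snd (P (a0, b0) k)))"
      if "a \<in> A1" for a
      using n1[OF that] sum_reward_schedule[where f = e1 and c = "(a, b0)"]
        sum_reward_schedule[where f = e1 and c = "(a0, b0)"]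
      by (cases "a = a0") (simp_all add: P_def e1_def algebra_simps)
    show "u2 a0 b + (\<Sum>k = 1..n + n. exp_pay A1 A2 u2 (fst (P (a0, b) k)) (snd (P (a0, b) k)))
        \<le> u2 a0 b0 + (\<Sum>k = 1..n + n. exp_pay A1 A2 u2 (fst (P (a0, b0) k)) (snd (P (a0, b0) k)))"
      if "b \<in> A2" for b
      using n2[OF that] sum_reward_schedule[where f = e2 and c = "(a0, b)"]
        sum_reward_schedule[where f = e2 and c = "(a0, b0)"]
      by (cases "b = b0") (simp_all add: P_def e2_def algebra_simps)
  qed
  moreover have "locally_suboptimal r A1 A2 u1 u2 (Suc (n + n)) \<sigma>1 \<sigma>2"
    unfolding locally_suboptimal_def
    using non_Nash by (intro exI[of _ "[]"]) (simp add: valid_hist_def \<sigma>1_def \<sigma>2_def scheduled_strategy_def)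
  ultimately show ?thesis
    unfolding in_G_LS_def by fastforce
qed

theorem mainTheorem14:
  fixes A1 :: "'a set" and A2 :: "'b set" and u1 u2 :: "'a \<Rightarrow> 'b \<Rightarrow> real"
  assumes "finite A1" "A1 \<noteq> {}" "finite A2" "A2 \<noteq> {}"
    and "\<exists>x\<in>nash_vals1 (True, False) A1 A2 u1 u2. \<exists>y\<in>nash_vals1 (True, False) A1 A2 u1 u2. x \<noteq> y"
    and "\<exists>x\<in>nash_vals2 (True, False) A1 A2 u1 u2. \<exists>y\<in>nash_vals2 (True, False) A1 A2 u1 u2. x \<noteq> y"
    and "in_G_LS (True, True) A1 A2 u1 u2"
  shows "in_G_LS (True, False) A1 A2 u1 u2"
proof -
  obtain a0 b0 where "a0 \<in> A1" "b0 \<in> A2"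
    and "(point_mass a0, point_mass b0) \<notin> stage_nash (True, False) A1 A2 u1 u2"
    using exists_pure_non_Nash_if_in_G_LS[OF assms(1,3,2,4,7)] by blast
  moreover obtain L1 H1 where "L1 \<in> stage_nash (True, False) A1 A2 u1 u2"
    "H1 \<in> stage_nash (True, False) A1 A2 u1 u2"
    and "(\<lambda>(p, q). exp_pay A1 A2 u1 p q) L1 < (\<lambda>(p, q). exp_pay A1 A2 u1 p q) H1"
    by (rule exists_less_if_two_values[OF assms(5)[unfolded nash_vals1_def]])
  moreover obtain L2 H2 where "L2 \<in> stage_nash (True, False) A1 A2 u1 u2"
    "H2 \<in> stage_nash (True, False) A1 A2 u1 u2"
    and "(\<lambda>(p, q). exp_pay A1 A2 u2 p q) L2 < (\<lambda>(p, q). exp_pay A1 A2 u2 p q) H2"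
    by (rule exists_less_if_two_values[OF assms(6)[unfolded nash_vals2_def]])
  ultimately show ?thesis
    using in_G_LS_if_pure_non_Nash[OF assms(1,3)] by (simp add: case_prod_beta)
qed

end
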